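(* Let $\sigma$ be the softmax-1 activation, take $m=0$, $r=0$ and unspecialized biases $b=\tilde b\mathbf 1_H$ with $\tilde b\in\mathbb R$. Then for every $h\in[H]$, $$\partial_{b_h}\tilde{\mathcal E}_\sigma(0,0,b,v)=-2\Big(\frac{Lv}{L+e^{\tilde b}}-1\Big)\frac vH\frac{e^{\tilde b}}{(L+e^{\tilde b})^2},\qquad \partial_v\tilde{\mathcal E}_\sigma(0,0,b,v)=2\Big(\frac{Lv}{L+e^{\tilde b}}-1\Big)\frac1{L+e^{\tilde b}}.$$ The fixed points of the corresponding gradient-flow system satisfy $Lv=L+e^{\tilde b}$ and they are attractive. Finally, at initialization $b=0$, $v=1$: $\partial_{b_h}\tilde{\mathcal E}_\sigma(0,0,0,1)>0$ and $\partial_v\tilde{\mathcal E}_\sigma(0,0,0,1)<0$.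
   Context: Fix integers $L,H,F\ge1$ and a distribution $P_\theta$ on $\mathbb R^F$; $\mathbf 1_H$ is the all-ones vector. For $m\in\mathbb R^{H\times F}$, $r$ symmetric $H\times H$, $b\in\mathbb R^H$, $v\in\mathbb R$: $\tilde{\mathcal E}_\sigma(m,r,b,v)=\mathbb E\big[\sum_{\ell=1}^L(\delta_{\ell,\epsilon}-\frac1H\sum_{h=1}^H\sigma(\chi,b,v;h)_\ell)^2\big]$, $\chi_{h\ell}=\sum_fm_{hf}\chi^*_{f\ell}+\sum_{h'}r_{hh'}\xi_{h'\ell}$, with $\epsilon\sim\mathrm{Unif}(\{1,\dots,L\})$, $\theta\sim P_\theta$, and conditionally independent $\chi^*_{:\ell}\sim\mathcal N(\delta_{\ell,\epsilon}\theta,I_F)$, $\xi_{:\ell}\sim\mathcal N(0,I_H)$. The softmax-1 activation is $\sigma(\chi,b,v;h)_\ell=v e^{\chi_{h\ell}}/(e^{b_h}+\sum_{\ell'=1}^Le^{\chi_{h\ell'}})$. The gradient flow is $\partial_\tau b=-\nabla_b\tilde{\mathcal E}_\sigma$, $\partial_\tau v=-\nabla_v\tilde{\mathcal E}_\sigma$. *)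

theory Defs
  imports "HOL-Probability.Probability"
begin

text \<open>Index conventions: heads h in {1..H}, features f in {1..F}, positions l in {1..L}.
  Matrices are functions nat => nat => real (only the entries with indices in range matter);
  random matrices chi* (F x L) and xi (H x L) are functions on index pairs.\<close>

definition gauss1 :: "real \<Rightarrow> real measure" where
  "gauss1 \<mu> = density lborel (normal_density \<mu> 1)"

definition chi_mat :: "nat \<Rightarrow> nat \<Rightarrow> (nat \<Rightarrow> nat \<Rightarrow> real) \<Rightarrow> (nat \<Rightarrow> nat \<Rightarrow> real)
    \<Rightarrow> (nat \<times> nat \<Rightarrow> real) \<Rightarrow> (nat \<times> nat \<Rightarrow> real) \<Rightarrow> nat \<Rightarrow> nat \<Rightarrow> real" where
  "chi_mat F H m r cs xi h l =
     (\<Sum>f=1..F. m h f * cs (f, l)) + (\<Sum>h'=1..H. r h h' * xi (h', l))"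

definition softmax1 :: "nat \<Rightarrow> (nat \<Rightarrow> nat \<Rightarrow> real) \<Rightarrow> (nat \<Rightarrow> real) \<Rightarrow> real \<Rightarrow> nat \<Rightarrow> nat \<Rightarrow> real" where
  "softmax1 L chi b v h l = v * exp (chi h l) / (exp (b h) + (\<Sum>l'=1..L. exp (chi h l')))"

definition sq_loss :: "nat \<Rightarrow> nat \<Rightarrow> nat \<Rightarrow> (nat \<Rightarrow> nat \<Rightarrow> real) \<Rightarrow> real" where
  "sq_loss L H eps out =
     (\<Sum>l=1..L. ((if l = eps then 1 else 0) - (1 / real H) * (\<Sum>h=1..H. out h l))\<^sup>2)"

text \<open>The population loss: eps uniform on {1..L}, theta ~ Ptheta, then chi* with independent
  N(delta_{l,eps} theta_f, 1) entries and xi with independent N(0,1) entries.\<close>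
definition Etilde :: "nat \<Rightarrow> nat \<Rightarrow> nat \<Rightarrow> (nat \<Rightarrow> real) measure \<Rightarrow> (nat \<Rightarrow> nat \<Rightarrow> real)
    \<Rightarrow> (nat \<Rightarrow> nat \<Rightarrow> real) \<Rightarrow> (nat \<Rightarrow> real) \<Rightarrow> real \<Rightarrow> real" where
  "Etilde L H F P m r b v =
     (1 / real L) * (\<Sum>eps=1..L.
        integral\<^sup>L P (\<lambda>\<theta>.
          integral\<^sup>L (PiM ({1..F} \<times> {1..L}) (\<lambda>(f, l). gauss1 (if l = eps then \<theta> f else 0))) (\<lambda>cs.
            integral\<^sup>L (PiM ({1..H} \<times> {1..L}) (\<lambda>_. gauss1 0)) (\<lambda>xi.
              sq_loss L H eps (softmax1 L (chi_mat F H m r cs xi) b v)))))"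

definition E0 :: "nat \<Rightarrow> nat \<Rightarrow> nat \<Rightarrow> (nat \<Rightarrow> real) measure \<Rightarrow> (nat \<Rightarrow> real) \<Rightarrow> real \<Rightarrow> real" where
  "E0 L H F P b v = Etilde L H F P (\<lambda>_ _. 0) (\<lambda>_ _. 0) b v"

definition pd_b :: "nat \<Rightarrow> nat \<Rightarrow> nat \<Rightarrow> (nat \<Rightarrow> real) measure \<Rightarrow> nat \<Rightarrow> (nat \<Rightarrow> real) \<Rightarrow> real \<Rightarrow> real" where
  "pd_b L H F P h b v = deriv (\<lambda>t. E0 L H F P (b(h := t)) v) (b h)"

definition pd_v :: "nat \<Rightarrow> nat \<Rightarrow> nat \<Rightarrow> (nat \<Rightarrow> real) measure \<Rightarrow> (nat \<Rightarrow> real) \<Rightarrow> real \<Rightarrow> real" where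
  "pd_v L H F P b v = deriv (\<lambda>w. E0 L H F P b w) v"

text \<open>Gradient flow restricted to unspecialized biases b = bt * 1_H:
  d bt/dtau = - d_{b_1} E, d v/dtau = - d_v E (all d_{b_h} coincide on this set).\<close>
definition rfixed :: "nat \<Rightarrow> nat \<Rightarrow> nat \<Rightarrow> (nat \<Rightarrow> real) measure \<Rightarrow> real \<Rightarrow> real \<Rightarrow> bool" where
  "rfixed L H F P bt v \<longleftrightarrow> pd_b L H F P 1 (\<lambda>_. bt) v = 0 \<and> pd_v L H F P (\<lambda>_. bt) v = 0"

definition rsolution :: "nat \<Rightarrow> nat \<Rightarrow> nat \<Rightarrow> (nat \<Rightarrow> real) measure \<Rightarrow> (real \<Rightarrow> real) \<Rightarrow> (real \<Rightarrow> real) \<Rightarrow> bool" where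
  "rsolution L H F P B V \<longleftrightarrow>
     (\<forall>\<tau>\<ge>0. (B has_real_derivative - pd_b L H F P 1 (\<lambda>_. B \<tau>) (V \<tau>)) (at \<tau> within {0..})
          \<and> (V has_real_derivative - pd_v L H F P (\<lambda>_. B \<tau>) (V \<tau>)) (at \<tau> within {0..}))"

text \<open>Attractive fixed point (the fixed points form a curve, so attraction is to the set
  of fixed points): every forward trajectory starting close enough converges to a fixed point.\<close>
definition rattractive :: "nat \<Rightarrow> nat \<Rightarrow> nat \<Rightarrow> (nat \<Rightarrow> real) measure \<Rightarrow> real \<Rightarrow> real \<Rightarrow> bool" where
  "rattractive L H F P bt v \<longleftrightarrow>
     (\<exists>e>0. \<forall>B V. rsolution L H F P B V \<and> dist (B 0, V 0) (bt, v) < e \<longrightarrow>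
        (\<exists>b_lim v_lim. rfixed L H F P b_lim v_lim \<and> (B \<longlongrightarrow> b_lim) at_top \<and> (V \<longlongrightarrow> v_lim) at_top))"

end

theory Submission
  imports Defs
begin

(* At m = r = 0 every attention score vanishes, so each head outputs v / (L + e^(b_h)) at every
   position whatever the data, and the loss is the
   quadratic 1 - 2 A + L A^2 in the mean head output A; the partial derivatives follow by the
   chain rule.  On the line of unspecialized biases both derivatives are multiples of the mass
   excess g = L v / (L + e^b) - 1, so the fixed points are exactly g = 0.
   Along the flow g' = - kappa g with kappa >= 0, so g^2 decreases and g keeps its initial sign.
   If g >= 0, then v decreases and stays above 1 while b increases and stays below ln (L v(0));
   if g <= 0, then v increases and is bounded by M = (L + e^(b(0))) / L while b decreases and
   b + (M / H) v increases.  Either way b and v converge, and the limit is a fixed point because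
   v' tends to - 2 g_lim / (L + e^(b_lim)), which must vanish as v converges. *)

lemma DERIV_within_nonneg_imp_nondecreasing:
  fixes f f' :: "real \<Rightarrow> real"
  assumes "s \<le> t" and "{s..t} \<subseteq> S"
    and deriv: "\<And>x. x \<in> {s..t} \<Longrightarrow> (f has_real_derivative f' x) (at x within S)"
    and nonneg: "\<And>x. x \<in> {s..t} \<Longrightarrow> 0 \<le> f' x"
  shows "f s \<le> f t"
proof (rule DERIV_nonneg_imp_increasing_open[OF \<open>s \<le> t\<close>])
  fix x assume x: "s < x" "x < t"
  then have "x \<in> interior S"
    using interior_mono[OF \<open>{s..t} \<subseteq> S\<close>] by auto
  then have "at x within S = at x" by (rule at_within_interior)
  then show "\<exists>y. DERIV f x :> y \<and> 0 \<le> y" using deriv[of x] nonneg[of x] x by auto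
next
  show "continuous_on {s..t} f"
    by (rule DERIV_continuous_on) (use deriv assms(2) in \<open>blast intro: has_field_derivative_subset\<close>)
qed

lemma DERIV_within_nonpos_imp_nonincreasing:
  fixes f f' :: "real \<Rightarrow> real"
  assumes "s \<le> t" and "{s..t} \<subseteq> S"
    and "\<And>x. x \<in> {s..t} \<Longrightarrow> (f has_real_derivative f' x) (at x within S)"
    and "\<And>x. x \<in> {s..t} \<Longrightarrow> f' x \<le> 0"
  shows "f t \<le> f s"
  using DERIV_within_nonneg_imp_nondecreasing[of s t S "\<lambda>x. - f x" "\<lambda>x. - f' x"] assms
  by (auto intro: DERIV_minus)

lemma nondecreasing_bounded_imp_convergent_at_top:
  fixes f :: "real \<Rightarrow> real"
  assumes mono: "\<And>s t. a \<le> s \<Longrightarrow> s \<le> t \<Longrightarrow> f s \<le> f t"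
    and bound: "\<And>t. a \<le> t \<Longrightarrow> f t \<le> M"
  shows "\<exists>l. (f \<longlongrightarrow> l) at_top"
proof
  have bdd: "bdd_above (f ` {a..})"
    using bound by (auto intro!: bdd_aboveI)
  show "(f \<longlongrightarrow> Sup (f ` {a..})) at_top"
  proof (rule increasing_tendsto)
    show "\<forall>\<^sub>F t in at_top. f t \<le> Sup (f ` {a..})"
      using eventually_ge_at_top[of a] by eventually_elim (use bdd in \<open>auto intro!: cSUP_upper\<close>)
  next
    fix y assume "y < Sup (f ` {a..})"
    then obtain s where s: "a \<le> s" "y < f s"
      using less_cSUP_iff[OF _ bdd] by auto
    show "\<forall>\<^sub>F t in at_top. y < f t"
      using eventually_ge_at_top[of s] by eventually_elim (use s mono in force)
  qed
qed

lemma nonincreasing_bounded_imp_convergent_at_top: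
  fixes f :: "real \<Rightarrow> real"
  assumes "\<And>s t. a \<le> s \<Longrightarrow> s \<le> t \<Longrightarrow> f t \<le> f s"
    and "\<And>t. a \<le> t \<Longrightarrow> M \<le> f t"
  shows "\<exists>l. (f \<longlongrightarrow> l) at_top"
proof -
  obtain l where "((\<lambda>t. - f t) \<longlongrightarrow> l) at_top"
    using nondecreasing_bounded_imp_convergent_at_top[of a "\<lambda>t. - f t" "- M"] assms by force
  then have "((\<lambda>t. - (- f t)) \<longlongrightarrow> - l) at_top" by (rule tendsto_minus)
  then show ?thesis by auto
qed

lemma derivative_limit_eq_0_if_convergent_at_top:
  fixes f f' :: "real \<Rightarrow> real"
  assumes "\<And>x. a \<le> x \<Longrightarrow> (f has_real_derivative f' x) (at x within {a..})"
    and "(f \<longlongrightarrow> l) at_top" and "(f' \<longlongrightarrow> c) at_top"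
  shows "c = 0"
proof -
  have positive_limit_absurd: False
    if deriv: "\<And>x. a \<le> x \<Longrightarrow> (f has_real_derivative f' x) (at x within {a..})"
    and lim: "(f \<longlongrightarrow> l) at_top" and lim': "(f' \<longlongrightarrow> c) at_top" and "0 < c"
    for f f' :: "real \<Rightarrow> real" and l c
  proof -
    have "\<forall>\<^sub>F x in at_top. c / 2 < f' x"
      using order_tendstoD(1)[OF lim', of "c / 2"] \<open>0 < c\<close> by simp
    then obtain T where T: "a \<le> T" "\<And>x. T \<le> x \<Longrightarrow> c / 2 < f' x"
      unfolding eventually_at_top_linorder by (metis max.cobounded1 max.cobounded2 order_trans)
    have "\<forall>\<^sub>F x in at_top. f T + c / 2 * (x - T) \<le> f x"
      unfolding eventually_at_top_linorder
    proof (intro exI allI impI)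
      fix x assume "T \<le> x"
      have "f T - c / 2 * T \<le> f x - c / 2 * x"
      proof (rule DERIV_within_nonneg_imp_nondecreasing[OF \<open>T \<le> x\<close>, of "{a..}" _
          "\<lambda>y. f' y - c / 2"])
        fix y assume y: "y \<in> {T..x}"
        then show "((\<lambda>x. f x - c / 2 * x) has_real_derivative f' y - c / 2) (at y within {a..})"
          using T(1) by (auto intro!: derivative_eq_intros deriv)
        show "0 \<le> f' y - c / 2" using T(2)[of y] y by simp
      qed (use T(1) in auto)
      then show "f T + c / 2 * (x - T) \<le> f x" by (simp add: field_simps)
    qed
    moreover have "filterlim (\<lambda>x. f T + c / 2 * (x - T)) at_top at_top"
      using \<open>0 < c\<close> by real_asymp
    ultimately have "filterlim f at_top at_top"
      by (rule filterlim_at_top_mono[rotated])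
    then show False
      using not_tendsto_and_filterlim_at_infinity[OF _ lim filterlim_at_top_imp_at_infinity] by simp
  qed
  have "\<not> 0 < c"
    using positive_limit_absurd[OF assms] by blast
  moreover have "\<not> c < 0"
    using positive_limit_absurd[of "\<lambda>x. - f x" "\<lambda>x. - f' x" "- l" "- c"] assms
    by (auto intro: DERIV_minus tendsto_minus)
  ultimately show "c = 0" by linarith
qed

(* L v / (L + e^b) is the total output mass (summed over positions) of a head at m = r = 0;
   the target puts mass 1 on the position eps. *)
definition mass_excess :: "real \<Rightarrow> real \<Rightarrow> real \<Rightarrow> real" where
  "mass_excess L b v = L * v / (L + exp b) - 1"

lemma add_exp_gt_0: "0 \<le> L \<Longrightarrow> 0 < L + exp (b::real)"
  by (simp add: add_nonneg_pos)

lemma mass_excess_nonneg_iff: "0 \<le> L \<Longrightarrow> 0 \<le> mass_excess L b v \<longleftrightarrow> L + exp b \<le> L * v"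
  using add_exp_gt_0[of L b] by (simp add: mass_excess_def le_divide_eq)

lemma mass_excess_nonpos_iff: "0 \<le> L \<Longrightarrow> mass_excess L b v \<le> 0 \<longleftrightarrow> L * v \<le> L + exp b"
  using add_exp_gt_0[of L b] by (simp add: mass_excess_def divide_le_eq)

lemma mass_excess_eq_0_iff: "0 \<le> L \<Longrightarrow> mass_excess L b v = 0 \<longleftrightarrow> L * v = L + exp b"
  using mass_excess_nonneg_iff[of L b v] mass_excess_nonpos_iff[of L b v] by auto

locale bias_value_flow =
  fixes L H :: real and B V :: "real \<Rightarrow> real"
  assumes L_pos: "0 < L" and H_pos: "0 < H"
    and B_deriv: "\<And>\<tau>. 0 \<le> \<tau> \<Longrightarrow> (B has_real_derivative
          2 * mass_excess L (B \<tau>) (V \<tau>) * (V \<tau> / H) * (exp (B \<tau>) / (L + exp (B \<tau>))\<^sup>2))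
          (at \<tau> within {0..})"
    and V_deriv: "\<And>\<tau>. 0 \<le> \<tau> \<Longrightarrow> (V has_real_derivative
          - 2 * mass_excess L (B \<tau>) (V \<tau>) / (L + exp (B \<tau>))) (at \<tau> within {0..})"
begin

definition excess :: "real \<Rightarrow> real" where
  "excess \<tau> = mass_excess L (B \<tau>) (V \<tau>)"

lemma L_add_exp_gt_0: "0 < L + exp b"
  using L_pos by (simp add: add_exp_gt_0)

lemma excess_has_derivative:
  assumes "0 \<le> \<tau>"
  shows "(excess has_real_derivative
      - (2 * L / (L + exp (B \<tau>))\<^sup>2 * (1 + (V \<tau> * exp (B \<tau>) / (L + exp (B \<tau>)))\<^sup>2 / H))
        * excess \<tau>)
      (at \<tau> within {0..})"
proof -
  let ?u = "\<lambda>x. L + exp (B x)"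
  define g where "g = excess \<tau>"
  have u_nz: "?u \<tau> \<noteq> 0"
    using L_add_exp_gt_0[of "B \<tau>"] by simp
  let ?B' = "2 * g * (V \<tau> / H) * (exp (B \<tau>) / (?u \<tau>)\<^sup>2)"
  have du: "(?u has_real_derivative exp (B \<tau>) * ?B') (at \<tau> within {0..})"
    using B_deriv[OF assms] unfolding g_def excess_def by (auto intro!: derivative_eq_intros)
  have dLV: "((\<lambda>x. L * V x) has_real_derivative L * (- 2 * g / ?u \<tau>)) (at \<tau> within {0..})"
    using V_deriv[OF assms] unfolding g_def excess_def by (auto intro!: derivative_eq_intros)
  have "((\<lambda>x. L * V x / ?u x - 1) has_real_derivative
      (L * (- 2 * g / ?u \<tau>) * ?u \<tau> - L * V \<tau> * (exp (B \<tau>) * ?B')) / (?u \<tau> * ?u \<tau>) - 0)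
      (at \<tau> within {0..})"
    by (intro DERIV_diff DERIV_divide[OF dLV du u_nz] DERIV_const)
  moreover have "(L * (- 2 * g / u) * u - L * v * (e * (2 * g * (v / H) * (e / u\<^sup>2)))) / (u * u) - 0
      = - (2 * L / u\<^sup>2 * (1 + (v * e / u)\<^sup>2 / H)) * g" if "u \<noteq> 0" for v e u :: real
    using that H_pos by (simp add: field_simps power2_eq_square)
  moreover have "excess = (\<lambda>x. L * V x / ?u x - 1)"
    by (simp add: fun_eq_iff excess_def mass_excess_def)
  ultimately show ?thesis
    using u_nz unfolding g_def by simp
qed

lemma excess_sq_nonincreasing:
  assumes "0 \<le> s" and "s \<le> t"
  shows "(excess t)\<^sup>2 \<le> (excess s)\<^sup>2"
proof (rule DERIV_within_nonpos_imp_nonincreasing[OF \<open>s \<le> t\<close>, of "{0..}"])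
  fix x assume x: "x \<in> {s..t}"
  let ?r = "2 * L / (L + exp (B x))\<^sup>2 * (1 + (V x * exp (B x) / (L + exp (B x)))\<^sup>2 / H)"
  show "((\<lambda>x. (excess x)\<^sup>2) has_real_derivative 2 * excess x * (- ?r * excess x)) (at x within {0..})"
    using x assms by (auto intro!: derivative_eq_intros excess_has_derivative)
  have "2 * e * (- r * e) \<le> 0" if "0 \<le> r" for e r :: real
    using that by (simp add: mult.assoc[symmetric] mult.commute[of _ e] flip: power2_eq_square)
  moreover have "0 \<le> ?r"
    using L_pos H_pos by simp
  ultimately show "2 * excess x * (- ?r * excess x) \<le> 0" .
qed (use assms in auto)

lemma continuous_on_excess: "continuous_on {0..} excess"
  by (rule DERIV_continuous_on) (use excess_has_derivative in auto)

lemma excess_nonneg: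
  assumes "0 \<le> excess 0" and "0 \<le> \<tau>"
  shows "0 \<le> excess \<tau>"
proof (rule ccontr)
  assume neg: "\<not> 0 \<le> excess \<tau>"
  then obtain s where "0 \<le> s" "s \<le> \<tau>" "excess s = 0"
    using IVT2'[of excess \<tau> 0 0] assms continuous_on_subset[OF continuous_on_excess, of "{0..\<tau>}"]
    by auto
  then show False
    using excess_sq_nonincreasing[of s \<tau>] neg by simp
qed

lemma excess_nonpos:
  assumes "excess 0 \<le> 0" and "0 \<le> \<tau>"
  shows "excess \<tau> \<le> 0"
proof (rule ccontr)
  assume pos: "\<not> excess \<tau> \<le> 0"
  then obtain s where "0 \<le> s" "s \<le> \<tau>" "excess s = 0"
    using IVT'[of excess 0 0 \<tau>] assms continuous_on_subset[OF continuous_on_excess, of "{0..\<tau>}"]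
    by auto
  then show False
    using excess_sq_nonincreasing[of s \<tau>] pos by simp
qed

lemma convergent_if_excess_nonneg:
  assumes nonneg: "\<And>\<tau>. 0 \<le> \<tau> \<Longrightarrow> 0 \<le> excess \<tau>"
  shows "\<exists>bl vl. (B \<longlongrightarrow> bl) at_top \<and> (V \<longlongrightarrow> vl) at_top"
proof -
  have mass: "L + exp (B \<tau>) \<le> L * V \<tau>" if "0 \<le> \<tau>" for \<tau>
    using nonneg[OF that] L_pos by (simp add: excess_def mass_excess_nonneg_iff)
  have V_gt_1: "1 < V \<tau>" if "0 \<le> \<tau>" for \<tau>
  proof -
    have "L * 1 < L * V \<tau>"
      using mass[OF that] exp_gt_zero[of "B \<tau>"] by linarith
    then show ?thesis using L_pos by simp
  qed
  have V_antimono: "V t \<le> V s" if "0 \<le> s" "s \<le> t" for s t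
  proof (rule DERIV_within_nonpos_imp_nonincreasing[OF that(2) _ V_deriv])
    fix x assume "x \<in> {s..t}"
    then have "0 \<le> excess x"
      using that nonneg by auto
    then show "- 2 * mass_excess L (B x) (V x) / (L + exp (B x)) \<le> 0"
      using L_add_exp_gt_0[of "B x"] unfolding excess_def by simp
  qed (use that in auto)
  have B_mono: "B s \<le> B t" if "0 \<le> s" "s \<le> t" for s t
  proof (rule DERIV_within_nonneg_imp_nondecreasing[OF that(2) _ B_deriv])
    fix x assume "x \<in> {s..t}"
    then have "0 \<le> excess x" "0 \<le> V x"
      using that nonneg V_gt_1[of x] by auto
    then show "0 \<le> 2 * mass_excess L (B x) (V x) * (V x / H) * (exp (B x) / (L + exp (B x))\<^sup>2)"
      using H_pos unfolding excess_def by simp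
  qed (use that in auto)
  have B_bound: "B t \<le> ln (L * V 0)" if "0 \<le> t" for t
  proof -
    have "exp (B t) \<le> L * V t"
      using mass[OF that] L_pos by simp
    also have "\<dots> \<le> L * V 0"
      using V_antimono[OF order_refl that] L_pos by simp
    finally show ?thesis
      using L_pos V_gt_1[of 0] by (simp add: ln_ge_iff)
  qed
  obtain bl where "(B \<longlongrightarrow> bl) at_top"
    using nondecreasing_bounded_imp_convergent_at_top[of 0 B] B_mono B_bound by blast
  moreover obtain vl where "(V \<longlongrightarrow> vl) at_top"
    using nonincreasing_bounded_imp_convergent_at_top[of 0 V 1] V_antimono V_gt_1 by force
  ultimately show ?thesis by blast
qed

lemma convergent_if_excess_nonpos:
  assumes nonpos: "\<And>\<tau>. 0 \<le> \<tau> \<Longrightarrow> excess \<tau> \<le> 0" and "0 < V 0"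
  shows "\<exists>bl vl. (B \<longlongrightarrow> bl) at_top \<and> (V \<longlongrightarrow> vl) at_top"
proof -
  have V_mono: "V s \<le> V t" if "0 \<le> s" "s \<le> t" for s t
  proof (rule DERIV_within_nonneg_imp_nondecreasing[OF that(2) _ V_deriv])
    fix x assume "x \<in> {s..t}"
    then have "excess x \<le> 0"
      using that nonpos by auto
    then show "0 \<le> - 2 * mass_excess L (B x) (V x) / (L + exp (B x))"
      using L_add_exp_gt_0[of "B x"] unfolding excess_def by (simp add: divide_nonpos_pos)
  qed (use that in auto)
  have V_pos: "0 < V \<tau>" if "0 \<le> \<tau>" for \<tau>
    using V_mono[OF order_refl that] \<open>0 < V 0\<close> by simp
  have B_antimono: "B t \<le> B s" if "0 \<le> s" "s \<le> t" for s t
  proof (rule DERIV_within_nonpos_imp_nonincreasing[OF that(2) _ B_deriv])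
    fix x assume "x \<in> {s..t}"
    then have "excess x \<le> 0" "0 \<le> V x"
      using that nonpos V_pos[of x] by auto
    then have "2 * excess x * (V x / H) \<le> 0"
      using mult_nonpos_nonneg[of "2 * excess x" "V x / H"] H_pos by simp
    then show "2 * mass_excess L (B x) (V x) * (V x / H) * (exp (B x) / (L + exp (B x))\<^sup>2) \<le> 0"
      unfolding excess_def by (rule mult_nonpos_nonneg) simp
  qed (use that in auto)
  define M where "M = (L + exp (B 0)) / L"
  have V_le_M: "V \<tau> \<le> M" if "0 \<le> \<tau>" for \<tau>
  proof -
    have "L * V \<tau> \<le> L + exp (B \<tau>)"
      using nonpos[OF that] L_pos by (simp add: excess_def mass_excess_nonpos_iff)
    also have "\<dots> \<le> L + exp (B 0)"
      using B_antimono[OF order_refl that] by simp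
    finally show ?thesis
      using L_pos by (simp add: M_def le_divide_eq mult.commute)
  qed
  \<comment> \<open>(M / H) V' dominates |B'| because V e^B / (L + e^B) \<le> V \<le> M.\<close>
  have lyapunov_mono: "B s + M / H * V s \<le> B t + M / H * V t" if "0 \<le> s" "s \<le> t" for s t
  proof (rule DERIV_within_nonneg_imp_nondecreasing[OF that(2), of "{0..}"])
    fix x assume "x \<in> {s..t}"
    then have x: "0 \<le> x" using that by simp
    let ?g = "excess x" and ?u = "L + exp (B x)"
    show "((\<lambda>x. B x + M / H * V x) has_real_derivative
        2 * ?g * (V x / H) * (exp (B x) / ?u\<^sup>2) + M / H * (- 2 * ?g / ?u)) (at x within {0..})"
      unfolding excess_def by (intro DERIV_add DERIV_cmult B_deriv[OF x] V_deriv[OF x])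
    have regroup: "2 * g * (v / H) * (e / u\<^sup>2) + M / H * (- 2 * g / u)
        = 2 * g / (H * u) * (v * e / u - M)" if "u \<noteq> 0" for g v e u :: real
      using that H_pos by (simp add: field_simps power2_eq_square)
    have "V x * exp (B x) / ?u \<le> V x"
      using V_pos[OF x] L_add_exp_gt_0[of "B x"] L_pos by (simp add: divide_le_eq mult_left_mono)
    then have "V x * exp (B x) / ?u - M \<le> 0"
      using V_le_M[OF x] by linarith
    moreover have "2 * ?g / (H * ?u) \<le> 0"
      using nonpos[OF x] H_pos L_add_exp_gt_0[of "B x"] by (simp add: divide_nonpos_pos)
    ultimately have "0 \<le> 2 * ?g / (H * ?u) * (V x * exp (B x) / ?u - M)"
      by (rule mult_nonpos_nonpos[rotated])
    then show "0 \<le> 2 * ?g * (V x / H) * (exp (B x) / ?u\<^sup>2) + M / H * (- 2 * ?g / ?u)"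
      using regroup[of ?u ?g "V x" "exp (B x)"] L_add_exp_gt_0[of "B x"] by simp
  qed (use that in auto)
  have B_bound: "B 0 + M / H * V 0 - M / H * M \<le> B t" if "0 \<le> t" for t
  proof -
    have "M / H * V t \<le> M / H * M"
      using V_le_M[OF that] V_le_M[of 0] \<open>0 < V 0\<close> H_pos by (intro mult_left_mono) auto
    then show ?thesis using lyapunov_mono[OF order_refl that] by simp
  qed
  obtain bl where "(B \<longlongrightarrow> bl) at_top"
    using nonincreasing_bounded_imp_convergent_at_top[of 0 B] B_antimono B_bound by blast
  moreover obtain vl where "(V \<longlongrightarrow> vl) at_top"
    using nondecreasing_bounded_imp_convergent_at_top[of 0 V M] V_mono V_le_M by force
  ultimately show ?thesis by blast
qed

lemma mass_excess_limit_eq_0: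
  assumes B_lim: "(B \<longlongrightarrow> bl) at_top" and V_lim: "(V \<longlongrightarrow> vl) at_top"
  shows "mass_excess L bl vl = 0"
proof -
  let ?V' = "\<lambda>\<tau>. - 2 * mass_excess L (B \<tau>) (V \<tau>) / (L + exp (B \<tau>))"
  have "(?V' \<longlongrightarrow> - 2 * mass_excess L bl vl / (L + exp bl)) at_top"
    unfolding mass_excess_def using L_add_exp_gt_0[of bl]
    by (intro tendsto_intros B_lim V_lim) auto
  then have "- 2 * mass_excess L bl vl / (L + exp bl) = 0"
    using derivative_limit_eq_0_if_convergent_at_top[of 0 V ?V'] V_deriv V_lim by blast
  then show ?thesis
    using L_add_exp_gt_0[of bl] by simp
qed

theorem tendsto_rest_point:
  assumes "0 < V 0"
  shows "\<exists>bl vl. L * vl = L + exp bl \<and> (B \<longlongrightarrow> bl) at_top \<and> (V \<longlongrightarrow> vl) at_top"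
proof -
  obtain bl vl where "(B \<longlongrightarrow> bl) at_top" "(V \<longlongrightarrow> vl) at_top"
  proof (cases "0 \<le> excess 0")
    case True
    then show ?thesis
      using that convergent_if_excess_nonneg[OF excess_nonneg] by blast
  next
    case False
    then show ?thesis
      using that convergent_if_excess_nonpos[OF excess_nonpos assms] by force
  qed
  then show ?thesis
    using mass_excess_limit_eq_0 mass_excess_eq_0_iff L_pos by auto
qed

end

definition mean_head_output :: "nat \<Rightarrow> nat \<Rightarrow> (nat \<Rightarrow> real) \<Rightarrow> real \<Rightarrow> real" where
  "mean_head_output L H b v = (\<Sum>h=1..H. v / (exp (b h) + real L)) / real H"

lemma softmax1_chi_mat_zero:
  "softmax1 L (chi_mat F H (\<lambda>_ _. 0) (\<lambda>_ _. 0) cs xi) b v = (\<lambda>h _. v / (exp (b h) + real L))"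
  by (simp add: softmax1_def chi_mat_def fun_eq_iff)

lemma sq_loss_position_independent:
  assumes "eps \<in> {1..L}"
  shows "sq_loss L H eps (\<lambda>h _. c h)
    = 1 - 2 * ((\<Sum>h=1..H. c h) / real H) + real L * ((\<Sum>h=1..H. c h) / real H)\<^sup>2"
proof -
  define A where "A = (\<Sum>h=1..H. c h) / real H"
  have "sq_loss L H eps (\<lambda>h _. c h) = (\<Sum>l=1..L. A\<^sup>2 + (if l = eps then 1 - 2 * A else 0))"
    unfolding sq_loss_def by (intro sum.cong) (auto simp: A_def power2_eq_square algebra_simps)
  also have "\<dots> = 1 - 2 * A + real L * A\<^sup>2"
    using assms by (simp add: sum.distrib)
  finally show ?thesis unfolding A_def .
qed

lemma prob_space_gauss1: "prob_space (gauss1 \<mu>)"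
  unfolding gauss1_def by (rule prob_space_normal_density) simp

lemma E0_eq_mean_head_output:
  assumes "1 \<le> L" and "prob_space P"
  shows "E0 L H F P b v = 1 - 2 * mean_head_output L H b v + real L * (mean_head_output L H b v)\<^sup>2"
proof -
  have "prob_space (PiM ({1..F} \<times> {1..L}) (\<lambda>(f, l). gauss1 (if l = eps then \<theta> f else 0)))"
    for eps \<theta>
    by (rule prob_space_PiM) (auto simp: prob_space_gauss1 split: prod.splits)
  moreover have "prob_space (PiM ({1..H} \<times> {1..L}) (\<lambda>_. gauss1 0))"
    by (rule prob_space_PiM) (auto simp: prob_space_gauss1)
  ultimately have "E0 L H F P b v
      = (\<Sum>eps=1..L. 1 - 2 * mean_head_output L H b v + real L * (mean_head_output L H b v)\<^sup>2) / real L"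
    unfolding E0_def Etilde_def softmax1_chi_mat_zero
    by (simp add: prob_space.prob_space assms(2) sq_loss_position_independent mean_head_output_def)
  then show ?thesis
    using assms(1) by simp
qed

lemma mean_head_output_const:
  assumes "1 \<le> H"
  shows "mean_head_output L H (\<lambda>_. b) v = v / (real L + exp b)"
  using assms by (simp add: mean_head_output_def add.commute)

lemma mean_head_output_fun_upd:
  assumes "h \<in> {1..H}"
  shows "mean_head_output L H ((\<lambda>_. b)(h := t)) v
    = ((real H - 1) * (v / (exp b + real L)) + v / (exp t + real L)) / real H"
proof -
  have "(\<Sum>h'=1..H. v / (exp (((\<lambda>_. b)(h := t)) h') + real L))
      = v / (exp t + real L) + (\<Sum>h'\<in>{1..H} - {h}. v / (exp b + real L))"
    using assms by (simp add: sum.remove[of _ h])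
  also have "\<dots> = v / (exp t + real L) + (real H - 1) * (v / (exp b + real L))"
    using assms by (simp add: of_nat_diff)
  finally show ?thesis
    unfolding mean_head_output_def by simp
qed

lemma quadratic_loss_has_real_derivative:
  assumes "(G has_real_derivative G') (at x)"
  shows "((\<lambda>y. 1 - 2 * G y + c * (G y)\<^sup>2) has_real_derivative 2 * (c * G x - 1) * G') (at x)"
  by (rule derivative_eq_intros assms refl | simp add: algebra_simps)+

lemma E0_has_real_derivative_b:
  assumes "1 \<le> L" "1 \<le> H" "prob_space P" "h \<in> {1..H}"
  shows "((\<lambda>t. E0 L H F P ((\<lambda>_. b)(h := t)) v) has_real_derivative
      - 2 * mass_excess (real L) b v * (v / real H) * (exp b / (real L + exp b)\<^sup>2)) (at b)"
proof -
  define G where "G t = mean_head_output L H ((\<lambda>_. b)(h := t)) v" for t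
  have "exp t + real L \<noteq> 0" for t
    using add_pos_nonneg[of "exp t" "real L"] by simp
  then have dG: "(G has_real_derivative - v * exp b / (real L + exp b)\<^sup>2 / real H) (at b)"
    unfolding G_def[abs_def] mean_head_output_fun_upd[OF assms(4)]
    using assms(2) by (auto intro!: derivative_eq_intros simp: power2_eq_square add.commute)
  have G_b: "G b = v / (real L + exp b)"
    using assms(2) fun_upd_triv[of "\<lambda>_. b" h] by (simp add: G_def mean_head_output_const)
  have E0_G: "(\<lambda>t. E0 L H F P ((\<lambda>_. b)(h := t)) v) = (\<lambda>t. 1 - 2 * G t + real L * (G t)\<^sup>2)"
    using assms(1,3) by (simp add: E0_eq_mean_head_output G_def)
  show ?thesis
    unfolding E0_G
    by (rule DERIV_cong[OF quadratic_loss_has_real_derivative[OF dG]])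
       (simp add: G_b mass_excess_def algebra_simps)
qed

lemma E0_has_real_derivative_v:
  assumes "1 \<le> L" "1 \<le> H" "prob_space P"
  shows "((\<lambda>w. E0 L H F P (\<lambda>_. b) w) has_real_derivative
      2 * mass_excess (real L) b v * (1 / (real L + exp b))) (at v)"
proof -
  have E0_G: "(\<lambda>w. E0 L H F P (\<lambda>_. b) w)
      = (\<lambda>w. 1 - 2 * (w / (real L + exp b)) + real L * (w / (real L + exp b))\<^sup>2)"
    using assms by (simp add: E0_eq_mean_head_output mean_head_output_const)
  show ?thesis
    unfolding E0_G
    by (rule DERIV_cong[OF quadratic_loss_has_real_derivative[OF DERIV_cdivide[OF DERIV_ident]]])
       (simp add: mass_excess_def)
qed

lemma pd_b_unspecialized:
  assumes "1 \<le> L" "1 \<le> H" "prob_space P" "h \<in> {1..H}"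
  shows "pd_b L H F P h (\<lambda>_. b) v
    = - 2 * mass_excess (real L) b v * (v / real H) * (exp b / (real L + exp b)\<^sup>2)"
  unfolding pd_b_def using E0_has_real_derivative_b[OF assms] by (simp add: DERIV_imp_deriv)

lemma pd_v_unspecialized:
  assumes "1 \<le> L" "1 \<le> H" "prob_space P"
  shows "pd_v L H F P (\<lambda>_. b) v = 2 * mass_excess (real L) b v * (1 / (real L + exp b))"
  unfolding pd_v_def using E0_has_real_derivative_v[OF assms] by (simp add: DERIV_imp_deriv)

lemma rfixed_iff:
  assumes "1 \<le> L" "1 \<le> H" "prob_space P"
  shows "rfixed L H F P b v \<longleftrightarrow> real L * v = real L + exp b"
proof -
  have "0 < real L + exp b"
    by (simp add: add_exp_gt_0)
  then have "rfixed L H F P b v \<longleftrightarrow> mass_excess (real L) b v = 0"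
    using assms by (auto simp: rfixed_def pd_b_unspecialized pd_v_unspecialized)
  then show ?thesis
    by (simp add: mass_excess_eq_0_iff)
qed

lemma rattractive_if_rfixed:
  assumes "1 \<le> L" "1 \<le> H" "prob_space P" and "rfixed L H F P b v"
  shows "rattractive L H F P b v"
  unfolding rattractive_def
proof (rule exI[of _ 1], intro conjI allI impI)
  fix B V
  assume "rsolution L H F P B V \<and> dist (B 0, V 0) (b, v) < 1"
  then have sol: "rsolution L H F P B V" and close: "dist (B 0, V 0) (b, v) < 1"
    by auto
  have "1 \<in> {1..H}"
    using assms(2) by simp
  then interpret bias_value_flow "real L" "real H" B V
    using assms(1,2) sol
    by unfold_locales (auto simp: rsolution_def pd_b_unspecialized pd_v_unspecialized assms(1-3))
  have "real L < real L * v"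
    using assms rfixed_iff[OF assms(1-3)] by (simp add: add_strict_increasing2)
  then have "1 < v"
    using assms(1) by simp
  moreover have "dist (V 0) v < 1"
    using close dist_snd_le[of "(B 0, V 0)" "(b, v)"] by simp
  ultimately have "0 < V 0"
    by (simp add: dist_real_def abs_less_iff)
  then show "\<exists>b_lim v_lim. rfixed L H F P b_lim v_lim
      \<and> (B \<longlongrightarrow> b_lim) at_top \<and> (V \<longlongrightarrow> v_lim) at_top"
    using tendsto_rest_point rfixed_iff[OF assms(1-3)] by blast
qed simp

lemma mass_excess_at_initialization: "0 \<le> L \<Longrightarrow> mass_excess L 0 1 < 0"
  by (simp add: mass_excess_def)

theorem lemma6:
  fixes L H F :: nat and P :: "(nat \<Rightarrow> real) measure"
  assumes "L \<ge> 1" and "H \<ge> 1" and "F \<ge> 1"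
    and "prob_space P" and "sets P = sets (PiM {1..F} (\<lambda>_. borel))"
  shows "(\<forall>bt v. \<forall>h\<in>{1..H}.
            ((\<lambda>t. E0 L H F P ((\<lambda>_. bt)(h := t)) v) has_real_derivative
               (- 2 * (real L * v / (real L + exp bt) - 1) * (v / real H)
                  * (exp bt / (real L + exp bt)\<^sup>2))) (at bt))
       \<and> (\<forall>bt v. ((\<lambda>w. E0 L H F P (\<lambda>_. bt) w) has_real_derivative
               (2 * (real L * v / (real L + exp bt) - 1) * (1 / (real L + exp bt)))) (at v))
       \<and> (\<forall>bt v. rfixed L H F P bt v \<longleftrightarrow> real L * v = real L + exp bt)
       \<and> (\<forall>bt v. rfixed L H F P bt v \<longrightarrow> rattractive L H F P bt v)
       \<and> (\<forall>h\<in>{1..H}. pd_b L H F P h (\<lambda>_. 0) 1 > 0)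
       \<and> pd_v L H F P (\<lambda>_. 0) 1 < 0"
proof -
  note setting = \<open>L \<ge> 1\<close> \<open>H \<ge> 1\<close> \<open>prob_space P\<close>
  have "mass_excess (real L) 0 1 < 0"
    by (simp add: mass_excess_at_initialization)
  then have "0 < pd_b L H F P h (\<lambda>_. 0) 1" if "h \<in> {1..H}" for h
    using setting that by (simp add: pd_b_unspecialized divide_neg_pos)
  moreover have "pd_v L H F P (\<lambda>_. 0) 1 < 0"
    using setting \<open>mass_excess (real L) 0 1 < 0\<close> by (simp add: pd_v_unspecialized divide_neg_pos)
  ultimately show ?thesis
    using E0_has_real_derivative_b[OF setting] E0_has_real_derivative_v[OF setting]
      rfixed_iff[OF setting] rattractive_if_rfixed[OF setting]
    unfolding mass_excess_def by blast
qed

end
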